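(* For the cycle $C_n$ with $n\ge 3$ vertices, $b_{OCD}(C_n)=1$ if $n=3$ and $b_{OCD}(C_n)=\lceil n/3\rceil$ if $n\ge 4$.
   Context: A set $S\subseteq V$ is a dominating set of a graph $G=(V,E)$ if every vertex not in $S$ is adjacent to a vertex of $S$. A set $\tilde D\subseteq V$ is an outer-connected dominating set of $G$ if $\tilde D$ is dominating and the induced subgraph $G[V\setminus\tilde D]$ is connected (the empty graph counts as connected). $\tilde\gamma_c(G)$ is the minimum size of an outer-connected dominating set. For a graph $G$ without isolated vertices, the outer-connected bondage number $b_{OCD}(G)$ is the minimum number of edges whose removal from $G$ yields a graph $G'$ with $\tilde\gamma_c(G')>\tilde\gamma_c(G)$. *)

theory Defs
  imports Complex_Main
begin

text \<open>Simple graphs are given by a vertex set V and an edge set E of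
  two-element subsets {u,v} of V.\<close>

definition dominating :: "'a set \<Rightarrow> 'a set set \<Rightarrow> 'a set \<Rightarrow> bool" where
  "dominating V E S \<longleftrightarrow> S \<subseteq> V \<and> (\<forall>v \<in> V - S. \<exists>u \<in> S. {u, v} \<in> E)"

text \<open>The induced subgraph on W is connected (vacuously true for W empty).\<close>
definition induced_connected :: "'a set set \<Rightarrow> 'a set \<Rightarrow> bool" where
  "induced_connected E W \<longleftrightarrow>
     (\<forall>u \<in> W. \<forall>v \<in> W. (u, v) \<in> {(x, y). x \<in> W \<and> y \<in> W \<and> {x, y} \<in> E}\<^sup>*)"

definition outer_connected_dominating :: "'a set \<Rightarrow> 'a set set \<Rightarrow> 'a set \<Rightarrow> bool" where
  "outer_connected_dominating V E D \<longleftrightarrow> dominating V E D \<and> induced_connected E (V - D)"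

definition ocd_number :: "'a set \<Rightarrow> 'a set set \<Rightarrow> nat" where
  "ocd_number V E = Min {card D | D. outer_connected_dominating V E D}"

definition ocd_bondage :: "'a set \<Rightarrow> 'a set set \<Rightarrow> nat" where
  "ocd_bondage V E = Min {card F | F. F \<subseteq> E \<and> ocd_number V (E - F) > ocd_number V E}"

definition cycle_vertices :: "nat \<Rightarrow> nat set" where
  "cycle_vertices n = {0..<n}"

definition cycle_edges :: "nat \<Rightarrow> nat set set" where
  "cycle_edges n = {{i, (i + 1) mod n} | i. i < n}"

end

theory Submission
  imports Defs "HOL-Number_Theory.Cong"
begin

text \<open>In a spanning subgraph of the cycle every vertex has at most two neighbours. If D is
  outer-connected dominating, each vertex outside D uses one of them for a neighbour in D, so
  the connected graph induced outside D has at most two vertices; it has two only if they form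
  an edge u v with further neighbours a, b in D, i.e. if three consecutive cycle edges survive.
  Hence the OCD number of a spanning subgraph is n - 2 if it keeps three consecutive edges and
  at least n - 1 otherwise. So the OCD number of the cycle goes up exactly when the deleted
  edges meet every three consecutive edges, and a smallest such set, every third edge, has
  ceiling (n / 3) elements, which is 1 for n = 3.\<close>

lemma mod_add_left_cancel_less:
  fixes i j k n :: nat
  assumes "i < n" "j < n" "(k + i) mod n = (k + j) mod n"
  shows "i = j"
  by (metis assms cong_add_lcancel_nat cong_def mod_less)

lemma mod_add_shift_neq:
  fixes i j k n :: nat
  assumes "j < i" "i < j + n"
  shows "(k + i) mod n \<noteq> (k + j) mod n"
proof -
  have "i - j < n"
    using assms by linarith
  then show ?thesis
    using assms mod_add_left_cancel_less[of "i - j" n 0 "k + j"] by auto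
qed

section \<open>Outer-connected domination in graphs of maximum degree two\<close>

definition max_degree_two :: "'a set set \<Rightarrow> bool" where
  "max_degree_two E \<longleftrightarrow>
     (\<forall>w a b c. {w, a} \<in> E \<longrightarrow> {w, b} \<in> E \<longrightarrow> {w, c} \<in> E \<longrightarrow> a \<noteq> b \<longrightarrow> c \<in> {a, b})"

lemma max_degree_two_subset: "max_degree_two E \<Longrightarrow> E' \<subseteq> E \<Longrightarrow> max_degree_two E'"
  unfolding max_degree_two_def by blast

definition induced_adj :: "'a set set \<Rightarrow> 'a set \<Rightarrow> ('a \<times> 'a) set" where
  "induced_adj E W = {(x, y). x \<in> W \<and> y \<in> W \<and> {x, y} \<in> E}"

lemma induced_connected_iff:
  "induced_connected E W \<longleftrightarrow> (\<forall>u \<in> W. \<forall>v \<in> W. (u, v) \<in> (induced_adj E W)\<^sup>*)"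
  unfolding induced_connected_def induced_adj_def ..

lemma reachable_outside_dominating_edge:
  assumes deg: "max_degree_two E" and dom: "dominating V E D"
    and u: "u \<in> V - D" and v: "v \<in> V - D" and uv: "{u, v} \<in> E"
    and "(u, x) \<in> (induced_adj E (V - D))\<^sup>*"
  shows "x \<in> {u, v}"
  \<comment> \<open>each of u, v has one neighbour in D besides the other, and no room for a third\<close>
  using \<open>(u, x) \<in> _\<close>
proof (induction rule: rtrancl_induct)
  case base
  then show ?case by simp
next
  case (step x y)
  then have xy: "x \<in> {u, v}" "y \<in> V - D" "{x, y} \<in> E"
    unfolding induced_adj_def by auto
  obtain a where "a \<in> D" "{a, x} \<in> E"
    using dom xy(1) u v unfolding dominating_def by blast
  then have a: "a \<in> D" "{x, a} \<in> E"
    by (simp_all add: insert_commute)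
  define x' where "x' = (if x = u then v else u)"
  have "{x, x'} \<in> E" "x' \<in> V - D"
    using uv u v xy(1) unfolding x'_def by (auto simp: insert_commute)
  moreover have "a \<noteq> x'"
    using a \<open>x' \<in> V - D\<close> by auto
  ultimately have "y \<in> {a, x'}"
    using a xy deg unfolding max_degree_two_def by blast
  then show ?case
    using a xy(2) x'_def by auto
qed

lemma ocd_complement_edge:
  assumes deg: "max_degree_two E" and ocd: "outer_connected_dominating V E D"
    and u: "u \<in> V - D" and w: "w \<in> V - D" and "u \<noteq> w"
  obtains v where "{u, v} \<in> E" "V - D = {u, v}"
proof -
  have dom: "dominating V E D" and con: "induced_connected E (V - D)"
    using ocd unfolding outer_connected_dominating_def by auto
  have "(u, w) \<in> (induced_adj E (V - D))\<^sup>*"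
    using con u w unfolding induced_connected_iff by blast
  then obtain v where "(u, v) \<in> induced_adj E (V - D)"
    using \<open>u \<noteq> w\<close> by (blast elim: converse_rtranclE)
  then have v: "v \<in> V - D" and uv: "{u, v} \<in> E"
    unfolding induced_adj_def by auto
  have "V - D \<subseteq> {u, v}"
  proof
    fix x
    assume "x \<in> V - D"
    then have "(u, x) \<in> (induced_adj E (V - D))\<^sup>*"
      using con u unfolding induced_connected_iff by blast
    then show "x \<in> {u, v}"
      using reachable_outside_dominating_edge[OF deg dom u v uv] by blast
  qed
  with u v uv that show thesis by blast
qed

lemma card_ocd_complement_le_two:
  assumes "max_degree_two E" "outer_connected_dominating V E D"
  shows "card (V - D) \<le> 2"
proof (cases "\<exists>u \<in> V - D. \<exists>w \<in> V - D. u \<noteq> w")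
  case True
  then obtain u v where "V - D = {u, v}"
    using ocd_complement_edge[OF assms] by blast
  then show ?thesis
    by (simp add: card_insert_le_m1)
next
  case False
  show ?thesis
  proof (cases "V - D = {}")
    case True
    then show ?thesis
      by (simp only: card.empty)
  next
    case False
    then obtain u where "u \<in> V - D"
      by blast
    with \<open>\<not> (\<exists>u \<in> V - D. \<exists>w \<in> V - D. u \<noteq> w)\<close> have "V - D = {u}"
      by blast
    then show ?thesis
      by simp
  qed
qed

lemma ocd_complement_two_path:
  assumes deg: "max_degree_two E" and ocd: "outer_connected_dominating V E D"
    and two: "card (V - D) = 2"
  obtains a u v b where "a \<in> D" "b \<in> D" "u \<notin> D" "v \<notin> D"
    "{a, u} \<in> E" "{u, v} \<in> E" "{v, b} \<in> E"
proof -
  obtain u w where "V - D = {u, w}" "u \<noteq> w"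
    using two unfolding card_2_iff by blast
  then obtain v where uv: "{u, v} \<in> E" "V - D = {u, v}"
    using ocd_complement_edge[OF deg ocd, of u w] by blast
  then have "u \<in> V - D" "v \<in> V - D"
    by blast+
  moreover have "dominating V E D"
    using ocd unfolding outer_connected_dominating_def by blast
  ultimately obtain a b where "a \<in> D" "{a, u} \<in> E" "b \<in> D" "{b, v} \<in> E"
    unfolding dominating_def by blast
  moreover have "{v, b} \<in> E"
    using \<open>{b, v} \<in> E\<close> by (simp add: insert_commute)
  ultimately show thesis
    using that uv(1) \<open>u \<in> V - D\<close> \<open>v \<in> V - D\<close> by blast
qed

lemma outer_connected_dominating_all: "outer_connected_dominating V E V"
  unfolding outer_connected_dominating_def dominating_def induced_connected_def by simp

lemma finite_ocd_cards: "finite V \<Longrightarrow> finite {card D | D. outer_connected_dominating V E D}"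
  by (rule finite_subset[of _ "card ` Pow V"])
    (auto simp: outer_connected_dominating_def dominating_def)

lemma ocd_number_le:
  "finite V \<Longrightarrow> outer_connected_dominating V E D \<Longrightarrow> ocd_number V E \<le> card D"
  unfolding ocd_number_def by (rule Min_le) (auto simp: finite_ocd_cards)

lemma obtain_minimum_ocd:
  assumes "finite V"
  obtains D where "outer_connected_dominating V E D" "card D = ocd_number V E"
proof -
  have "ocd_number V E \<in> {card D | D. outer_connected_dominating V E D}"
    unfolding ocd_number_def using finite_ocd_cards[OF assms] outer_connected_dominating_all
    by (intro Min_in) auto
  with that show thesis by auto
qed

section \<open>The cycle and its spanning subgraphs\<close>

definition cycle_edge :: "nat \<Rightarrow> nat \<Rightarrow> nat set" where
  "cycle_edge n k = {k mod n, Suc k mod n}"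

lemma cycle_edge_mod: "cycle_edge n (k mod n) = cycle_edge n k"
  unfolding cycle_edge_def by (simp add: mod_Suc_eq)

lemma cycle_edges_eq_image: "cycle_edges n = cycle_edge n ` {..<n}"
  unfolding cycle_edges_def cycle_edge_def by auto

lemma cycle_edge_in_cycle_edges: "0 < n \<Longrightarrow> cycle_edge n k \<in> cycle_edges n"
  unfolding cycle_edges_eq_image by (metis cycle_edge_mod image_eqI lessThan_iff mod_less_divisor)

lemma cycle_edge_eq_iff:
  assumes "3 \<le> n"
  shows "cycle_edge n i = cycle_edge n j \<longleftrightarrow> i mod n = j mod n"
proof
  assume "cycle_edge n i = cycle_edge n j"
  then have "i mod n = j mod n \<or> (i mod n = Suc j mod n \<and> Suc i mod n = j mod n)"
    unfolding cycle_edge_def by (auto simp: doubleton_eq_iff)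
  moreover have "(j + 2) mod n \<noteq> (j + 0) mod n"
    using mod_add_left_cancel_less[of 2 n 0 j] assms by auto
  ultimately show "i mod n = j mod n"
    by (metis add_2_eq_Suc' add_0_right mod_Suc_eq)
next
  assume "i mod n = j mod n"
  then show "cycle_edge n i = cycle_edge n j"
    by (metis cycle_edge_mod)
qed

lemma mem_cycle_edges_iff:
  "{u, v} \<in> cycle_edges n \<longleftrightarrow> u < n \<and> v < n \<and> (v = Suc u mod n \<or> u = Suc v mod n)"
  unfolding cycle_edges_def by (auto simp: doubleton_eq_iff)

lemma max_degree_two_cycle_edges: "max_degree_two (cycle_edges n)"
  unfolding max_degree_two_def
proof (intro allI impI)
  fix w a b c
  assume a: "{w, a} \<in> cycle_edges n" and b: "{w, b} \<in> cycle_edges n"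
    and c: "{w, c} \<in> cycle_edges n" and "a \<noteq> b"
  have neighbour: "x = Suc w mod n \<or> (x < n \<and> Suc x mod n = w)" if "{w, x} \<in> cycle_edges n" for x
    using that unfolding mem_cycle_edges_iff by blast
  have pred_unique: "x = y" if "x < n" "y < n" "Suc x mod n = Suc y mod n" for x y
    using mod_add_left_cancel_less[of x n y 1] that by simp
  show "c \<in> {a, b}"
    using neighbour[OF a] neighbour[OF b] neighbour[OF c] pred_unique \<open>a \<noteq> b\<close>
    by (metis insert_iff)
qed

definition three_consecutive_edges :: "nat \<Rightarrow> nat set set \<Rightarrow> bool" where
  "three_consecutive_edges n E \<longleftrightarrow>
     (\<exists>k. cycle_edge n k \<in> E \<and> cycle_edge n (Suc k) \<in> E \<and> cycle_edge n (Suc (Suc k)) \<in> E)"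

lemma cycle_path_three_consecutive_edges:
  assumes sub: "E \<subseteq> cycle_edges n"
    and edges: "{a, u} \<in> E" "{u, v} \<in> E" "{v, b} \<in> E"
    and "a \<noteq> v" "b \<noteq> u"
  shows "three_consecutive_edges n E"
proof -
  have forward: "three_consecutive_edges n E"
    if ua: "{u, a} \<in> E" and uv: "{u, v} \<in> E" and vb: "{v, b} \<in> E"
      and "a \<noteq> v" "b \<noteq> u" and v: "v = Suc u mod n"
    for a u v b
  proof -
    from ua sub have "{u, a} \<in> cycle_edges n"
      by blast
    then have "u < n" "a < n" "a = Suc u mod n \<or> Suc a mod n = u"
      unfolding mem_cycle_edges_iff by auto
    with \<open>a \<noteq> v\<close> v have au: "Suc a mod n = u"
      by blast
    from vb sub have "{v, b} \<in> cycle_edges n"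
      by blast
    then have "b < n" "b = Suc v mod n \<or> Suc b mod n = v"
      unfolding mem_cycle_edges_iff by auto
    moreover have "Suc b mod n \<noteq> v"
      using mod_add_left_cancel_less[of b n u 1] \<open>b < n\<close> \<open>u < n\<close> \<open>b \<noteq> u\<close> v by auto
    ultimately have vb': "Suc v mod n = b"
      by blast
    have "cycle_edge n a = {a, u}"
      unfolding cycle_edge_def using \<open>a < n\<close> au by simp
    moreover have "cycle_edge n (Suc a) = {u, v}"
      using cycle_edge_mod[of n "Suc a"] \<open>u < n\<close> v au unfolding cycle_edge_def by simp
    moreover have "cycle_edge n (Suc (Suc a)) = {v, b}"
      using cycle_edge_mod[of n "Suc (Suc a)"] v au vb' mod_Suc_eq[of "Suc a" n]
      unfolding cycle_edge_def by simp
    ultimately show ?thesis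
      unfolding three_consecutive_edges_def
      using ua uv vb by (metis insert_commute)
  qed
  have "{u, v} \<in> cycle_edges n"
    using edges sub by auto
  then consider "v = Suc u mod n" | "u = Suc v mod n"
    unfolding mem_cycle_edges_iff by blast
  then show ?thesis
  proof cases
    case 1
    then show ?thesis
      using forward[of u a v b] edges assms by (simp add: insert_commute)
  next
    case 2
    then show ?thesis
      using forward[of v b u a] edges assms by (simp add: insert_commute)
  qed
qed

lemma card_ocd_cycle_subgraph_ge:
  assumes sub: "E \<subseteq> cycle_edges n"
    and ocd: "outer_connected_dominating (cycle_vertices n) E D"
  shows "(if three_consecutive_edges n E then n - 2 else n - 1) \<le> card D"
proof -
  let ?V = "cycle_vertices n"
  have deg: "max_degree_two E"
    using max_degree_two_subset[OF max_degree_two_cycle_edges sub] .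
  have "D \<subseteq> ?V"
    using ocd unfolding outer_connected_dominating_def dominating_def by blast
  then have card_compl: "card (?V - D) = n - card D"
    by (simp add: card_Diff_subset cycle_vertices_def finite_subset)
  have le_two: "card (?V - D) \<le> 2"
    using card_ocd_complement_le_two[OF deg ocd] .
  have path: "three_consecutive_edges n E" if two: "card (?V - D) = 2"
  proof -
    obtain a u v b where "a \<in> D" "b \<in> D" "u \<notin> D" "v \<notin> D"
      "{a, u} \<in> E" "{u, v} \<in> E" "{v, b} \<in> E"
      using ocd_complement_two_path[OF deg ocd two] by metis
    then show ?thesis
      using cycle_path_three_consecutive_edges[OF sub, of a u v b] by blast
  qed
  show ?thesis
  proof (cases "three_consecutive_edges n E")
    case True
    then show ?thesis
      using le_two card_compl by simp
  next
    case False
    then have "card (?V - D) \<le> 1"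
      using le_two path by fastforce
    then show ?thesis
      using False card_compl by simp
  qed
qed

lemma ocd_cycle_subgraph_of_three_consecutive_edges:
  assumes n: "3 \<le> n" and "three_consecutive_edges n E"
  obtains D where "outer_connected_dominating (cycle_vertices n) E D" "card D = n - 2"
proof -
  obtain k where k: "cycle_edge n k \<in> E" "cycle_edge n (Suc k) \<in> E" "cycle_edge n (Suc (Suc k)) \<in> E"
    using assms(2) unfolding three_consecutive_edges_def by blast
  define r where "r t = (k + t) mod n" for t
  have r_lt: "r t \<in> cycle_vertices n" for t
    using n unfolding r_def cycle_vertices_def by simp
  have "r 1 \<noteq> r 0" "r 2 \<noteq> r 0" "r 3 \<noteq> r 1" "r 3 \<noteq> r 2" "r 2 \<noteq> r 1"
    unfolding r_def using n by (simp_all only: mod_add_shift_neq not_False_eq_True)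
  then have dist: "r 0 \<notin> {r 1, r 2}" "r 3 \<notin> {r 1, r 2}" "r 1 \<noteq> r 2"
    by auto
  have edges: "{r 0, r 1} \<in> E" "{r 1, r 2} \<in> E" "{r 3, r 2} \<in> E"
    using k unfolding cycle_edge_def r_def by (simp_all add: insert_commute numeral_3_eq_3)
  let ?D = "cycle_vertices n - {r 1, r 2}"
  have "dominating (cycle_vertices n) E ?D"
    unfolding dominating_def
  proof (intro conjI ballI)
    fix x
    assume "x \<in> cycle_vertices n - ?D"
    then have "x = r 1 \<or> x = r 2"
      by blast
    then show "\<exists>u \<in> ?D. {u, x} \<in> E"
      using edges dist r_lt by blast
  qed blast
  moreover have "induced_connected E (cycle_vertices n - ?D)"
  proof -
    have "cycle_vertices n - ?D = {r 1, r 2}"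
      using r_lt by auto
    then show ?thesis
      unfolding induced_connected_iff induced_adj_def
      using edges(2) by (auto simp: insert_commute)
  qed
  moreover have "card ?D = n - 2"
    using dist r_lt by (simp add: card_Diff_subset cycle_vertices_def)
  ultimately show thesis
    using that unfolding outer_connected_dominating_def by blast
qed

lemma ocd_number_cycle_subgraph_ge:
  assumes "E \<subseteq> cycle_edges n"
  shows "(if three_consecutive_edges n E then n - 2 else n - 1) \<le> ocd_number (cycle_vertices n) E"
proof -
  obtain D where "outer_connected_dominating (cycle_vertices n) E D"
    "card D = ocd_number (cycle_vertices n) E"
    using obtain_minimum_ocd[of "cycle_vertices n"] by (auto simp: cycle_vertices_def)
  with card_ocd_cycle_subgraph_ge[OF assms] show ?thesis by metis
qed

lemma ocd_number_cycle_subgraph_le: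
  assumes "3 \<le> n" "three_consecutive_edges n E"
  shows "ocd_number (cycle_vertices n) E \<le> n - 2"
proof -
  obtain D where "outer_connected_dominating (cycle_vertices n) E D" "card D = n - 2"
    using ocd_cycle_subgraph_of_three_consecutive_edges[OF assms] .
  with ocd_number_le show ?thesis
    by (metis cycle_vertices_def finite_atLeastLessThan)
qed

lemma ocd_number_cycle:
  assumes "3 \<le> n"
  shows "ocd_number (cycle_vertices n) (cycle_edges n) = n - 2"
proof -
  have three: "three_consecutive_edges n (cycle_edges n)"
    unfolding three_consecutive_edges_def using assms by (simp add: cycle_edge_in_cycle_edges)
  with ocd_number_cycle_subgraph_ge[of "cycle_edges n" n] ocd_number_cycle_subgraph_le[OF assms three]
  show ?thesis by simp
qed

lemma ocd_number_cycle_subgraph_gt_iff: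
  assumes "3 \<le> n" "E \<subseteq> cycle_edges n"
  shows "ocd_number (cycle_vertices n) (cycle_edges n) < ocd_number (cycle_vertices n) E
    \<longleftrightarrow> \<not> three_consecutive_edges n E"
proof (cases "three_consecutive_edges n E")
  case True
  then show ?thesis
    using ocd_number_cycle[OF assms(1)] ocd_number_cycle_subgraph_le[OF assms(1) True] by simp
next
  case False
  then show ?thesis
    using ocd_number_cycle[OF assms(1)] ocd_number_cycle_subgraph_ge[OF assms(2)] assms(1) by simp
qed

section \<open>Meeting all cyclic triples\<close>

definition meets_consecutive_triples :: "nat \<Rightarrow> nat set \<Rightarrow> bool" where
  "meets_consecutive_triples n J \<longleftrightarrow> (\<forall>k. \<exists>t < 3. (k + t) mod n \<in> J)"

lemma card_meets_consecutive_triples: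
  assumes "finite J" "meets_consecutive_triples n J"
  shows "n \<le> 3 * card J"
proof -
  obtain t where t: "\<And>k. t k < 3 \<and> (k + t k) mod n \<in> J"
    using assms(2) unfolding meets_consecutive_triples_def by metis
  define g where "g k = ((k + t k) mod n, t k)" for k
  have "inj_on g {..<n}"
  proof (rule inj_onI)
    fix k k'
    assume "k \<in> {..<n}" "k' \<in> {..<n}" "g k = g k'"
    moreover from \<open>g k = g k'\<close> have "t k = t k'" "(k + t k) mod n = (k' + t k') mod n"
      unfolding g_def by (metis prod.inject)+
    then have "(t k + k) mod n = (t k + k') mod n"
      by (simp add: add.commute)
    ultimately show "k = k'"
      using mod_add_left_cancel_less[of k n k' "t k"] by simp
  qed
  moreover have "g ` {..<n} \<subseteq> J \<times> {..<3}"
    using t unfolding g_def by auto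
  ultimately have "card {..<n} \<le> card (J \<times> {..<3::nat})"
    by (intro card_inj_on_le) (auto simp: assms(1))
  then show ?thesis
    by (simp add: card_cartesian_product)
qed

lemma meets_consecutive_triples_multiples_of_three:
  assumes "0 < n"
  shows "meets_consecutive_triples n {i. i < n \<and> 3 dvd i}"
  unfolding meets_consecutive_triples_def
proof
  fix k
  define m where "m = k mod n"
  have "m < n"
    using assms unfolding m_def by simp
  have shift: "(k + t) mod n = (m + t) mod n" for t
    unfolding m_def by (simp add: mod_add_left_eq)
  have "\<exists>t :: nat. t < 3 \<and> 3 dvd (m + t)"
    by presburger
  then obtain t where "t < 3" "3 dvd (m + t)"
    by blast
  show "\<exists>t < 3. (k + t) mod n \<in> {i. i < n \<and> 3 dvd i}"
  proof (cases "m + t < n")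
    case True
    then show ?thesis
      using \<open>t < 3\<close> \<open>3 dvd (m + t)\<close> shift by auto
  next
    case False
    then have "(k + (n - m)) mod n = 0" and "n - m < 3"
      using shift[of "n - m"] \<open>m < n\<close> \<open>t < 3\<close> by auto
    then show ?thesis
      using assms by (metis (no_types, lifting) dvd_0_right mem_Collect_eq)
  qed
qed

lemma card_multiples_of_three: "card {i. i < n \<and> 3 dvd i} = (n + 2) div 3"
proof -
  have "{i. i < n \<and> 3 dvd i} = (\<lambda>t. 3 * t) ` {..<(n + 2) div 3}"
  proof (intro set_eqI iffI)
    fix x
    assume "x \<in> {i. i < n \<and> 3 dvd i}"
    then obtain t where "x = 3 * t" "3 * t < n"
      by auto
    then show "x \<in> (\<lambda>t. 3 * t) ` {..<(n + 2) div 3}"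
      by (auto intro!: image_eqI[of _ _ t])
  next
    fix x
    assume "x \<in> (\<lambda>t. 3 * t) ` {..<(n + 2) div 3}"
    then show "x \<in> {i. i < n \<and> 3 dvd i}"
      by auto
  qed
  then show ?thesis
    by (simp add: card_image inj_on_def)
qed

lemma Min_card_meets_consecutive_triples:
  assumes "0 < n"
  shows "Min {card J | J. J \<subseteq> {..<n} \<and> meets_consecutive_triples n J} = (n + 2) div 3"
proof (rule Min_eqI)
  show "finite {card J | J. J \<subseteq> {..<n} \<and> meets_consecutive_triples n J}"
    by (rule finite_subset[of _ "card ` Pow {..<n}"]) auto
next
  fix c
  assume "c \<in> {card J | J. J \<subseteq> {..<n} \<and> meets_consecutive_triples n J}"
  then obtain J where "c = card J" "J \<subseteq> {..<n}" "meets_consecutive_triples n J"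
    by blast
  then have "n \<le> 3 * c"
    using card_meets_consecutive_triples finite_subset by blast
  then show "(n + 2) div 3 \<le> c"
    by presburger
next
  let ?J = "{i. i < n \<and> 3 dvd i}"
  show "(n + 2) div 3 \<in> {card J | J. J \<subseteq> {..<n} \<and> meets_consecutive_triples n J}"
    using meets_consecutive_triples_multiples_of_three[OF assms] card_multiples_of_three
    by (intro CollectI exI[of _ ?J]) auto
qed

section \<open>The bondage number of the cycle\<close>

lemma all_less_three: "(\<forall>t < 3. P t) \<longleftrightarrow> P 0 \<and> P (Suc 0) \<and> P (Suc (Suc 0))"
  by (auto simp: less_Suc_eq numeral_3_eq_3)

lemma cycle_edge_mem_image_iff:
  assumes "3 \<le> n" "J \<subseteq> {..<n}"
  shows "cycle_edge n k \<in> cycle_edge n ` J \<longleftrightarrow> k mod n \<in> J"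
  using assms cycle_edge_eq_iff[OF assms(1)] by (force simp: image_iff)

lemma three_consecutive_edges_remove_iff:
  assumes "3 \<le> n" "J \<subseteq> {..<n}"
  shows "three_consecutive_edges n (cycle_edges n - cycle_edge n ` J)
    \<longleftrightarrow> \<not> meets_consecutive_triples n J"
  unfolding three_consecutive_edges_def meets_consecutive_triples_def
  using assms by (simp add: cycle_edge_in_cycle_edges cycle_edge_mem_image_iff all_less_three)

lemma ocd_bondage_cycle_eq_Min:
  assumes n: "3 \<le> n"
  shows "ocd_bondage (cycle_vertices n) (cycle_edges n)
    = Min {card J | J. J \<subseteq> {..<n} \<and> meets_consecutive_triples n J}"
proof -
  let ?V = "cycle_vertices n" and ?E = "cycle_edges n"
  have "inj_on (cycle_edge n) {..<n}"
    by (rule inj_onI) (simp add: cycle_edge_eq_iff[OF n])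
  then have card_eq: "card (cycle_edge n ` J) = card J" if "J \<subseteq> {..<n}" for J
    using card_image inj_on_subset that by blast
  have increases: "ocd_number ?V ?E < ocd_number ?V (?E - cycle_edge n ` J)
      \<longleftrightarrow> meets_consecutive_triples n J" if "J \<subseteq> {..<n}" for J
    using ocd_number_cycle_subgraph_gt_iff[OF n Diff_subset] three_consecutive_edges_remove_iff[OF n that]
    by simp
  have "{card F | F. F \<subseteq> ?E \<and> ocd_number ?V (?E - F) > ocd_number ?V ?E}
      = {card J | J. J \<subseteq> {..<n} \<and> meets_consecutive_triples n J}"
  proof (intro set_eqI iffI)
    fix c
    assume "c \<in> {card F | F. F \<subseteq> ?E \<and> ocd_number ?V (?E - F) > ocd_number ?V ?E}"
    then obtain F where F: "c = card F" "F \<subseteq> cycle_edge n ` {..<n}"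
      "ocd_number ?V (?E - F) > ocd_number ?V ?E"
      unfolding cycle_edges_eq_image by blast
    then obtain J where "J \<subseteq> {..<n}" "F = cycle_edge n ` J"
      by (auto simp: subset_image_iff)
    with F card_eq increases show "c \<in> {card J | J. J \<subseteq> {..<n} \<and> meets_consecutive_triples n J}"
      by auto
  next
    fix c
    assume "c \<in> {card J | J. J \<subseteq> {..<n} \<and> meets_consecutive_triples n J}"
    then obtain J where J: "c = card J" "J \<subseteq> {..<n}" "meets_consecutive_triples n J"
      by blast
    moreover have "cycle_edge n ` J \<subseteq> ?E"
      using J(2) unfolding cycle_edges_eq_image by blast
    ultimately show "c \<in> {card F | F. F \<subseteq> ?E \<and> ocd_number ?V (?E - F) > ocd_number ?V ?E}"
      using card_eq increases by (metis (mono_tags, lifting) mem_Collect_eq)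
  qed
  then show ?thesis
    unfolding ocd_bondage_def by simp
qed

theorem theorem7p1:
  fixes n :: nat
  assumes "n \<ge> 3"
  shows "ocd_bondage (cycle_vertices n) (cycle_edges n) =
           (if n = 3 then 1 else nat \<lceil>real n / 3\<rceil>)"
proof -
  have "ocd_bondage (cycle_vertices n) (cycle_edges n) = (n + 2) div 3"
    using ocd_bondage_cycle_eq_Min[OF assms] Min_card_meets_consecutive_triples assms by simp
  moreover have "nat \<lceil>real n / 3\<rceil> = (n + 2) div 3"
    by linarith
  ultimately show ?thesis
    by simp
qed

end
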